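(* Let $p$ be a prime, $K$ a finite extension of $\mathbf Q_p$, and let $\nu$ be the valuation on $\mathbf C_p$ normalized by $\nu(p)=1$, $|\cdot|$ the corresponding absolute value. Let $$f(t,x)=x^n+c_{n-1}(t)x^{n-1}+\cdots+c_1(t)x+c_0(t),\qquad c_i(t)\in\mathcal O_K[[t]],$$ and consider the map $\pi$ from the locus $\{(t,x): |t|<1,\ |x|<1,\ f(t,x)=0\}$ to the open unit $t$-disk, $(t,x)\mapsto t$. Assume that $x=0$ is a simple root of $f(0,x)$ (the point $b$), let $D_{vert}$ denote the nonempty set of the remaining roots of $f(0,x)$ in the open unit disk $\{|x|<1\}$, let $e$ be the number of roots of $f(0,x)$ with $|x|<1$ counted with multiplicity (so $e=1+\#D_{vert}$ when these roots are simple), and let $v_{vert}:=\max_{x'\in D_{vert}}\nu(x')$. Then for every $t'\in\mathbf C_p$ with $|t'|<|p^{e\cdot v_{vert}}|$ there is exactly one $x'\in\mathbf C_p$ with $|x'|<|p^{v_{vert}}|$ and $f(t',x')=0$.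
   Context: This is the local description of the map from a formal neighbourhood of a point $b$ on a (smooth at $b_p$) modular curve to the $j$-line with parameter $t=j-j_E$: $x$ is a formal parameter at $b$ with $x(b)=0$, and $D_{vert}$ is the set of other points of the formal fibre over $t=0$. $\mathbf D(r,x)$ denotes the open disk $\{|x|<r\}$. *)

theory Defs
  imports Complex_Main "HOL-Computational_Algebra.Computational_Algebra"
begin

definition nonarch_abs :: "('a::field \<Rightarrow> real) \<Rightarrow> bool" where
  "nonarch_abs av \<longleftrightarrow>
     (\<forall>x. av x \<ge> 0) \<and> (\<forall>x. av x = 0 \<longleftrightarrow> x = 0) \<and>
     (\<forall>x y. av (x * y) = av x * av y) \<and>
     (\<forall>x y. av (x + y) \<le> max (av x) (av y))"

definition av_complete :: "('a::field \<Rightarrow> real) \<Rightarrow> bool" where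
  "av_complete av \<longleftrightarrow>
     (\<forall>X::nat \<Rightarrow> 'a. (\<forall>\<epsilon>>0. \<exists>N. \<forall>m\<ge>N. \<forall>k\<ge>N. av (X m - X k) < \<epsilon>) \<longrightarrow>
        (\<exists>L. (\<lambda>m. av (X m - L)) \<longlonglongrightarrow> 0))"

definition alg_closed_field :: "'a::field itself \<Rightarrow> bool" where
  "alg_closed_field _ \<longleftrightarrow> (\<forall>q::'a poly. degree q > 0 \<longrightarrow> (\<exists>x. poly q x = 0))"

definition av_sums :: "('a::field \<Rightarrow> real) \<Rightarrow> (nat \<Rightarrow> 'a) \<Rightarrow> 'a \<Rightarrow> bool" where
  "av_sums av g s \<longleftrightarrow> (\<lambda>N. av ((\<Sum>k<N. g k) - s)) \<longlonglongrightarrow> 0"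

definition ps_eval :: "('a::field \<Rightarrow> real) \<Rightarrow> 'a fps \<Rightarrow> 'a \<Rightarrow> 'a" where
  "ps_eval av a t = (THE s. av_sums av (\<lambda>k. fps_nth a k * t ^ k) s)"

definition fval :: "('a::field \<Rightarrow> real) \<Rightarrow> nat \<Rightarrow> (nat \<Rightarrow> 'a fps) \<Rightarrow> 'a \<Rightarrow> 'a \<Rightarrow> 'a" where
  "fval av n c t x = x ^ n + (\<Sum>i<n. ps_eval av (c i) t * x ^ i)"

definition f0poly :: "nat \<Rightarrow> (nat \<Rightarrow> 'a::field fps) \<Rightarrow> 'a poly" where
  "f0poly n c = monom 1 n + (\<Sum>i<n. monom (fps_nth (c i) 0) i)"

end

theory Submission
  imports Defs
begin

text \<open>
  Write f(0, x) = x g(x) with g(0) \<noteq> 0 and let a_j be the coefficients of f(0, x). Every root of g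
  has absolute value at least r = |p^v_vert|, so factoring g into linear factors over the
  algebraically closed field gives the Newton polygon bounds |a_(j+1)| r^j \<le> |a_1| and, counting
  the e - 1 roots of g in the unit disk, r^(e-1) \<le> |a_1|. For |t'| < r^e the coefficients of
  f(t', x) differ from the a_j by at most |t'| < |a_1| r, so the linear coefficient still dominates
  on the disk |x| < r. Hence f(t', x) has a root there (otherwise the same bound applied to f(t', x)
  would give |a_1| r \<le> |f(t', 0)| \<le> |t'|), and it has only one, because for distinct x, y in the
  disk f(t', x) - f(t', y) = (x - y)(a_1 + terms of smaller absolute value) \<noteq> 0.
\<close>

section \<open>Monic polynomials and linear factors\<close>

definition monic_of_coeffs :: "nat \<Rightarrow> (nat \<Rightarrow> 'a::comm_ring_1) \<Rightarrow> 'a poly" where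
  "monic_of_coeffs n \<beta> = monom 1 n + (\<Sum>i<n. monom (\<beta> i) i)"

lemma coeff_monic_of_coeffs:
  "coeff (monic_of_coeffs n \<beta>) j = (if j = n then 1 else if j < n then \<beta> j else 0)"
  by (auto simp: monic_of_coeffs_def coeff_sum coeff_monom sum.delta)

lemma lead_coeff_monic_of_coeffs [simp]: "lead_coeff (monic_of_coeffs n \<beta>) = 1"
proof -
  have "degree (monic_of_coeffs n \<beta>) \<le> n"
    by (rule degree_le) (simp add: coeff_monic_of_coeffs)
  moreover have "n \<le> degree (monic_of_coeffs n \<beta>)"
    by (rule le_degree) (simp add: coeff_monic_of_coeffs)
  ultimately have "degree (monic_of_coeffs n \<beta>) = n"
    by (rule antisym)
  then show ?thesis
    by (simp add: coeff_monic_of_coeffs)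
qed

lemma monic_of_coeffs_neq_0 [simp]: "monic_of_coeffs n \<beta> \<noteq> 0"
  using lead_coeff_monic_of_coeffs[of n \<beta>] by (metis leading_coeff_0_iff zero_neq_one)

lemma poly_monic_of_coeffs: "poly (monic_of_coeffs n \<beta>) x = x ^ n + (\<Sum>i<n. \<beta> i * x ^ i)"
  by (simp add: monic_of_coeffs_def poly_monom poly_sum)

lemma f0poly_eq_monic_of_coeffs: "f0poly n c = monic_of_coeffs n (\<lambda>i. fps_nth (c i) 0)"
  unfolding f0poly_def monic_of_coeffs_def ..

lemma fval_eq_poly_monic_of_coeffs:
  fixes av :: "'a::field \<Rightarrow> real"
  shows "fval av n c t x = poly (monic_of_coeffs n (\<lambda>i. ps_eval av (c i) t)) x"
  unfolding fval_def poly_monic_of_coeffs ..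

lemma coeff_linear_factor_mult_Suc:
  fixes z :: "'a::comm_ring_1"
  shows "coeff ([:-z, 1:] * Q) (Suc k) = coeff Q k - z * coeff Q (Suc k)"
  by (simp add: algebra_simps)

lemma order_linear_factor:
  fixes z :: "'a::idom"
  shows "order w [:-z, 1:] = (if w = z then 1 else 0)"
  using order_power_n_n[of z 1] by (auto intro: order_0I)

lemma alg_closed_linear_factor:
  fixes Q :: "'a::field poly"
  assumes "alg_closed_field TYPE('a)" and "0 < degree Q"
  obtains z Q' where "Q = [:-z, 1:] * Q'" and "degree Q' < degree Q"
proof -
  obtain z where "poly Q z = 0"
    using assms unfolding alg_closed_field_def by blast
  then obtain Q' where Q: "Q = [:-z, 1:] * Q'"
    by (metis dvdE poly_eq_0_iff_dvd)
  with assms(2) have "Q' \<noteq> 0"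
    by auto
  then have "degree Q = Suc (degree Q')"
    unfolding Q by (subst degree_mult_eq) auto
  with Q that show ?thesis
    by simp
qed

lemma alg_closed_poly_induct [consumes 2, case_names const linear]:
  fixes Q :: "'a::field poly"
  assumes "alg_closed_field TYPE('a)" and "Q \<noteq> 0"
    and const: "\<And>a. a \<noteq> 0 \<Longrightarrow> P [:a:]"
    and linear: "\<And>z Q. Q \<noteq> 0 \<Longrightarrow> P Q \<Longrightarrow> P ([:-z, 1:] * Q)"
  shows "P Q"
  using assms(2)
proof (induction "degree Q" arbitrary: Q rule: less_induct)
  case less
  show ?case
  proof (cases "degree Q = 0")
    case True
    then show ?thesis
      using const less.prems by (metis degree_eq_zeroE pCons_eq_0_iff)
  next
    case False
    then obtain z Q' where Q: "Q = [:-z, 1:] * Q'" and "degree Q' < degree Q"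
      using alg_closed_linear_factor[OF assms(1)] by blast
    moreover from Q less.prems have "Q' \<noteq> 0"
      by auto
    ultimately show ?thesis
      using less.hyps linear by blast
  qed
qed

section \<open>Ultrametric absolute values and power series\<close>

locale nonarch_field =
  fixes av :: "'a::field \<Rightarrow> real"
  assumes nonarch: "nonarch_abs av"
begin

lemma av_nonneg: "0 \<le> av x"
  using nonarch unfolding nonarch_abs_def by blast

lemma av_eq_0_iff [simp]: "av x = 0 \<longleftrightarrow> x = 0"
  using nonarch unfolding nonarch_abs_def by blast

lemma av_mult: "av (x * y) = av x * av y"
  using nonarch unfolding nonarch_abs_def by blast

lemma av_add_le_max: "av (x + y) \<le> max (av x) (av y)"
  using nonarch unfolding nonarch_abs_def by blast

lemma av_0 [simp]: "av 0 = 0"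
  by simp

lemma av_pos_iff: "0 < av x \<longleftrightarrow> x \<noteq> 0"
  using av_nonneg[of x] by (auto simp: less_le)

lemma av_1 [simp]: "av 1 = 1"
  using av_mult[of 1 1] by simp

lemma av_minus [simp]: "av (- x) = av x"
proof -
  have "av (-1) * av (-1) = 1"
    using av_mult[of "-1" "-1"] by simp
  then have "av (-1) = 1"
    using av_nonneg[of "-1"] by (metis power2_eq_1_iff power2_eq_square neg_0_le_iff_le not_one_le_zero)
  then show ?thesis
    using av_mult[of "-1" x] by simp
qed

lemma av_diff_le_max: "av (x - y) \<le> max (av x) (av y)"
  using av_add_le_max[of x "- y"] by simp

lemma av_diff_commute: "av (x - y) = av (y - x)"
  using av_minus[of "x - y"] by simp

lemma av_power: "av (x ^ k) = av x ^ k"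
  by (induction k) (simp_all add: av_mult)

lemma av_eq_of_av_diff_less:
  assumes "av (x - y) < av y"
  shows "av x = av y"
proof -
  have "av y \<le> max (av x) (av (x - y))"
    using av_diff_le_max[of x "x - y"] by simp
  moreover have "av x \<le> max (av y) (av (x - y))"
    using av_add_le_max[of y "x - y"] by simp
  ultimately show ?thesis
    using assms by (auto simp: max_def split: if_splits)
qed

lemma av_sum_le:
  assumes "finite I" "\<And>i. i \<in> I \<Longrightarrow> av (f i) \<le> B" "0 \<le> B"
  shows "av (sum f I) \<le> B"
  using assms
proof (induction I rule: finite_induct)
  case (insert i I)
  then have "max (av (f i)) (av (sum f I)) \<le> B"
    by simp
  moreover have "av (sum f (insert i I)) \<le> max (av (f i)) (av (sum f I))"
    using insert.hyps av_add_le_max by simp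
  ultimately show ?case
    by linarith
qed simp

lemma av_sum_less:
  assumes "finite I" "\<And>i. i \<in> I \<Longrightarrow> av (f i) < B" "0 < B"
  shows "av (sum f I) < B"
  using assms
proof (induction I rule: finite_induct)
  case (insert i I)
  then have "max (av (f i)) (av (sum f I)) < B"
    by simp
  moreover have "av (sum f (insert i I)) \<le> max (av (f i)) (av (sum f I))"
    using insert.hyps av_add_le_max by simp
  ultimately show ?case
    by linarith
qed simp

lemma av_sums_unique:
  assumes "av_sums av g s" and "av_sums av g s'"
  shows "s = s'"
proof -
  let ?S = "\<lambda>N. \<Sum>k<N. g k"
  have "av (s - s') \<le> av (?S N - s) + av (?S N - s')" for N
    using av_diff_le_max[of "?S N - s'" "?S N - s"] av_nonneg[of "?S N - s"] av_nonneg[of "?S N - s'"]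
    by simp
  moreover have "(\<lambda>N. av (?S N - s) + av (?S N - s')) \<longlonglongrightarrow> 0"
    using tendsto_add[OF assms[unfolded av_sums_def]] by simp
  ultimately have "av (s - s') \<le> 0"
    by (intro LIMSEQ_le_const[where a = "av (s - s')"]) auto
  then show ?thesis
    using av_nonneg[of "s - s'"] by simp
qed

lemma av_sums_exists:
  assumes "av_complete av" and "(\<lambda>k. av (g k)) \<longlonglongrightarrow> 0"
  shows "\<exists>s. av_sums av g s"
proof -
  let ?S = "\<lambda>N. \<Sum>k<N. g k"
  have tail: "av (?S m - ?S k) < \<epsilon>" if "\<forall>i\<ge>N. av (g i) < \<epsilon>" "N \<le> k" "k \<le> m" "0 < \<epsilon>"
    for m k N \<epsilon>
  proof -
    have "?S m - ?S k = (\<Sum>i\<in>{k..<m}. g i)"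
      using that(3) by (simp add: lessThan_atLeast0 sum_diff_nat_ivl)
    also have "av \<dots> < \<epsilon>"
      using that by (intro av_sum_less) auto
    finally show ?thesis .
  qed
  have "\<exists>N. \<forall>m\<ge>N. \<forall>k\<ge>N. av (?S m - ?S k) < \<epsilon>" if "0 < \<epsilon>" for \<epsilon>
  proof -
    obtain N where N: "\<forall>i\<ge>N. av (g i) < \<epsilon>"
      using order_tendstoD(2)[OF assms(2) \<open>0 < \<epsilon>\<close>] by (auto simp: eventually_sequentially)
    have "av (?S m - ?S k) < \<epsilon>" if "N \<le> m" "N \<le> k" for m k
    proof (cases "k \<le> m")
      case False
      then have "av (?S k - ?S m) < \<epsilon>"
        using tail[OF N] that \<open>0 < \<epsilon>\<close> by simp
      then show ?thesis
        using av_diff_commute[of "?S m" "?S k"] by simp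
    qed (use tail[OF N] that \<open>0 < \<epsilon>\<close> in simp)
    then show ?thesis
      by blast
  qed
  then obtain L where "(\<lambda>m. av (?S m - L)) \<longlonglongrightarrow> 0"
    using assms(1) unfolding av_complete_def by presburger
  then show ?thesis
    unfolding av_sums_def by blast
qed

lemma av_sums_shift:
  assumes "av_sums av g s"
  shows "av_sums av (\<lambda>k. g (Suc k)) (s - g 0)"
proof -
  have shift: "(\<Sum>k<Suc N. g k) - s = (\<Sum>k<N. g (Suc k)) - (s - g 0)" for N
    by (simp only: sum.lessThan_Suc_shift) simp
  show ?thesis
    using LIMSEQ_Suc[OF assms[unfolded av_sums_def]] unfolding av_sums_def shift .
qed

lemma av_sums_le:
  assumes "av_sums av g s" and "\<And>k. av (g k) \<le> B"
  shows "av s \<le> B"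
proof -
  let ?S = "\<lambda>N. \<Sum>k<N. g k"
  have "0 \<le> B"
    using assms(2)[of 0] av_nonneg[of "g 0"] by linarith
  have "av s \<le> B + av (?S N - s)" for N
  proof -
    have "av (?S N) \<le> B"
      using assms(2) \<open>0 \<le> B\<close> by (intro av_sum_le) auto
    moreover have "av s \<le> max (av (?S N)) (av (?S N - s))"
      using av_diff_le_max[of "?S N" "?S N - s"] by simp
    ultimately show ?thesis
      using av_nonneg[of "?S N - s"] \<open>0 \<le> B\<close> by (auto simp: max_def split: if_splits)
  qed
  moreover have "(\<lambda>N. B + av (?S N - s)) \<longlonglongrightarrow> B"
    using tendsto_add[OF tendsto_const assms(1)[unfolded av_sums_def]] by simp
  ultimately show ?thesis
    by (intro LIMSEQ_le_const[where a = "av s"]) auto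
qed

lemma ps_eval_eqI:
  assumes "av_sums av (\<lambda>k. fps_nth a k * t ^ k) s"
  shows "ps_eval av a t = s"
  unfolding ps_eval_def
proof (rule the_equality)
  show "av_sums av (\<lambda>k. fps_nth a k * t ^ k) s"
    by (rule assms)
  show "s' = s" if "av_sums av (\<lambda>k. fps_nth a k * t ^ k) s'" for s'
    using that assms by (rule av_sums_unique)
qed

lemma av_ps_eval_minus_constant_le:
  assumes "av_complete av" and "\<And>k. av (fps_nth a k) \<le> 1" and "av t < 1"
  shows "av (ps_eval av a t - fps_nth a 0) \<le> av t"
proof -
  define g where "g k = fps_nth a k * t ^ k" for k
  have g_le: "av (g k) \<le> av t ^ k" for k
  proof -
    have "av (g k) = av (fps_nth a k) * av t ^ k"
      by (simp add: g_def av_mult av_power)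
    also have "\<dots> \<le> av t ^ k"
      using assms(2)[of k] by (intro mult_left_le_one_le) (simp_all add: av_nonneg)
    finally show ?thesis .
  qed
  have "(\<lambda>k. av t ^ k) \<longlonglongrightarrow> 0"
    using assms(3) av_nonneg[of t] by (intro LIMSEQ_power_zero) simp
  then have "(\<lambda>k. av (g k)) \<longlonglongrightarrow> 0"
    by (intro tendsto_sandwich[of "\<lambda>_. 0" "\<lambda>k. av (g k)" sequentially "\<lambda>k. av t ^ k"])
      (simp_all add: av_nonneg g_le)
  then obtain s where s: "av_sums av g s"
    using av_sums_exists[OF assms(1)] by blast
  have "av (g (Suc k)) \<le> av t" for k
    using g_le[of "Suc k"] power_decreasing[of 1 "Suc k" "av t"] assms(3) av_nonneg[of t] by simp
  then have "av (s - g 0) \<le> av t"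
    by (rule av_sums_le[OF av_sums_shift[OF s]])
  moreover have "ps_eval av a t = s"
    using s unfolding g_def by (rule ps_eval_eqI)
  ultimately show ?thesis
    by (simp add: g_def)
qed

section \<open>Newton polygon bounds and roots in a disk\<close>

definition unit_disk_root_count :: "'a poly \<Rightarrow> nat" where
  "unit_disk_root_count Q = (\<Sum>w\<in>{w. av w < 1 \<and> poly Q w = 0}. order w Q)"

lemma unit_disk_root_count_const [simp]:
  assumes "a \<noteq> 0"
  shows "unit_disk_root_count [:a:] = 0"
  using assms by (simp add: unit_disk_root_count_def)

lemma unit_disk_root_count_linear_mult:
  assumes "Q \<noteq> 0"
  shows "unit_disk_root_count ([:-z, 1:] * Q) = (if av z < 1 then 1 else 0) + unit_disk_root_count Q"
proof -
  define P where "P = [:-z, 1:] * Q"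
  define S where "S = {w. av w < 1 \<and> poly P w = 0}"
  have "P \<noteq> 0"
    using assms unfolding P_def by (metis mult_eq_0_iff pCons_eq_0_iff one_neq_zero)
  then have "finite S"
    unfolding S_def by (rule rev_finite_subset[OF poly_roots_finite]) auto
  have order_P: "order w P = (if w = z then 1 else 0) + order w Q" for w
    using order_mult[OF \<open>P \<noteq> 0\<close>[unfolded P_def]] by (simp add: P_def order_linear_factor)
  have "unit_disk_root_count P = (\<Sum>w\<in>S. if w = z then 1 else 0) + (\<Sum>w\<in>S. order w Q)"
    unfolding unit_disk_root_count_def S_def[symmetric] order_P by (simp add: sum.distrib)
  also have "(\<Sum>w\<in>S. if w = z then 1 else 0) = (if av z < 1 then 1 else (0::nat))"
    using \<open>finite S\<close> by (simp add: sum.delta S_def P_def)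
  also have "(\<Sum>w\<in>S. order w Q) = unit_disk_root_count Q"
    unfolding unit_disk_root_count_def
    by (rule sum.mono_neutral_right) (use \<open>finite S\<close> in \<open>auto simp: S_def P_def order_0I\<close>)
  finally show ?thesis
    unfolding P_def .
qed

(* Peeling off a linear factor x - z multiplies the constant coefficient by |z| \<ge> r and shifts
   the other coefficients up by one degree. *)
lemma av_coeff_power_le_av_coeff_0:
  assumes "alg_closed_field TYPE('a)" and "Q \<noteq> 0" and "0 \<le> r"
    and "\<And>z. poly Q z = 0 \<Longrightarrow> r \<le> av z"
  shows "av (coeff Q j) * r ^ j \<le> av (coeff Q 0)"
  using assms(1,2,4)
proof (induction Q arbitrary: j rule: alg_closed_poly_induct)
  case (const a)
  then show ?case
    by (cases j) (simp_all add: av_nonneg)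
next
  case (linear z Q)
  then have "r \<le> av z" and IH: "\<And>i. av (coeff Q i) * r ^ i \<le> av (coeff Q 0)"
    by auto
  show ?case
  proof (cases j)
    case (Suc k)
    have "av (coeff Q k) * r ^ j \<le> av z * av (coeff Q 0)"
      using mult_mono[OF IH[of k] \<open>r \<le> av z\<close>] assms(3) av_nonneg by (simp add: Suc mult_ac)
    moreover have "av (z * coeff Q (Suc k)) * r ^ j \<le> av z * av (coeff Q 0)"
      using mult_left_mono[OF IH[of "Suc k"] av_nonneg[of z]] by (simp add: Suc av_mult mult_ac)
    ultimately have "max (av (coeff Q k)) (av (z * coeff Q (Suc k))) * r ^ j \<le> av z * av (coeff Q 0)"
      by (simp add: max_def)
    moreover have "av (coeff ([:-z, 1:] * Q) j) \<le> max (av (coeff Q k)) (av (z * coeff Q (Suc k)))"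
      using av_diff_le_max unfolding Suc coeff_linear_factor_mult_Suc .
    ultimately show ?thesis
      using assms(3) by (simp add: av_mult order_trans[OF mult_right_mono])
  qed (simp add: av_mult)
qed

lemma av_lead_coeff_power_root_count_le:
  assumes "alg_closed_field TYPE('a)" and "Q \<noteq> 0" and "0 \<le> r" and "r \<le> 1"
    and "\<And>z. poly Q z = 0 \<Longrightarrow> r \<le> av z"
  shows "av (lead_coeff Q) * r ^ unit_disk_root_count Q \<le> av (coeff Q 0)"
  using assms(1,2,5)
proof (induction Q rule: alg_closed_poly_induct)
  case (linear z Q)
  then have "r \<le> av z" and IH: "av (lead_coeff Q) * r ^ unit_disk_root_count Q \<le> av (coeff Q 0)"
    by auto
  have "lead_coeff ([:-z, 1:] * Q) = lead_coeff Q"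
    by (simp only: lead_coeff_mult) simp
  then have "av (lead_coeff ([:-z, 1:] * Q)) * r ^ unit_disk_root_count ([:-z, 1:] * Q)
      = (if av z < 1 then r else 1) * (av (lead_coeff Q) * r ^ unit_disk_root_count Q)"
    by (simp only: unit_disk_root_count_linear_mult[OF \<open>Q \<noteq> 0\<close>]) simp
  also have "\<dots> \<le> av z * av (coeff Q 0)"
    using \<open>r \<le> av z\<close> IH assms(3) av_nonneg by (intro mult_mono) auto
  also have "\<dots> = av (coeff ([:-z, 1:] * Q) 0)"
    by (simp add: av_mult)
  finally show ?case .
qed simp

lemma av_power_diff_le:
  assumes "av x \<le> \<rho>" and "av y \<le> \<rho>"
  shows "av (x ^ i - y ^ i) \<le> av (x - y) * \<rho> ^ (i - 1)"
proof (cases i)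
  case 0
  then show ?thesis
    using assms av_nonneg[of x] av_nonneg[of "x - y"] by simp
next
  case (Suc m)
  have "0 \<le> \<rho>"
    using assms(1) av_nonneg[of x] by linarith
  have "av (\<Sum>k<i. y ^ (i - Suc k) * x ^ k) \<le> \<rho> ^ m"
  proof (rule av_sum_le)
    fix k assume "k \<in> {..<i}"
    then have m: "m = (i - Suc k) + k"
      using Suc by simp
    have "av (y ^ (i - Suc k) * x ^ k) = av y ^ (i - Suc k) * av x ^ k"
      by (simp add: av_mult av_power)
    also have "\<dots> \<le> \<rho> ^ (i - Suc k) * \<rho> ^ k"
      using assms \<open>0 \<le> \<rho>\<close> by (intro mult_mono power_mono) (simp_all add: av_nonneg)
    finally show "av (y ^ (i - Suc k) * x ^ k) \<le> \<rho> ^ m"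
      unfolding m power_add .
  qed (use \<open>0 \<le> \<rho>\<close> in simp_all)
  then have "av (x - y) * av (\<Sum>k<i. y ^ (i - Suc k) * x ^ k) \<le> av (x - y) * \<rho> ^ m"
    by (rule mult_left_mono) (simp add: av_nonneg)
  then show ?thesis
    unfolding power_diff_sumr2[of x i y] av_mult using Suc by simp
qed

lemma inj_on_poly_disk:
  assumes "\<And>i. 2 \<le> i \<Longrightarrow> av (coeff F i) * \<rho> ^ (i - 1) < av (coeff F 1)"
  shows "inj_on (poly F) {x. av x \<le> \<rho>}"
proof (rule inj_onI)
  fix x y
  assume x: "x \<in> {x. av x \<le> \<rho>}" and y: "y \<in> {x. av x \<le> \<rho>}" and eq: "poly F x = poly F y"
  show "x = y"
  proof (rule ccontr)
    assume "x \<noteq> y"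
    define M where "M = av (coeff F 1) * av (x - y)"
    have "0 \<le> \<rho>"
      using x av_nonneg[of x] by simp
    then have "0 \<le> av (coeff F 2) * \<rho> ^ (2 - 1)"
      by (simp add: av_nonneg)
    then have "0 < av (coeff F 1)"
      using assms[of 2] by linarith
    then have "0 < M"
      using \<open>x \<noteq> y\<close> by (simp add: M_def av_pos_iff)
    have "1 \<le> degree F"
      using \<open>0 < av (coeff F 1)\<close> by (intro le_degree) auto
    let ?rest = "\<Sum>i\<in>{..degree F} - {1}. coeff F i * (x ^ i - y ^ i)"
    have "0 = poly F x - poly F y"
      using eq by simp
    also have "\<dots> = (\<Sum>i\<le>degree F. coeff F i * (x ^ i - y ^ i))"
      by (simp add: poly_altdef sum_subtractf right_diff_distrib)
    also have "\<dots> = coeff F 1 * (x - y) + ?rest"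
      using \<open>1 \<le> degree F\<close> by (subst sum.remove[of _ 1]) auto
    finally have "?rest = - (coeff F 1 * (x - y))"
      by (simp add: eq_neg_iff_add_eq_0 add.commute)
    then have "av ?rest = M"
      by (simp add: M_def av_mult)
    moreover have "av ?rest < M"
    proof (rule av_sum_less)
      fix i assume "i \<in> {..degree F} - {1}"
      then consider "i = 0" | "2 \<le> i"
        by force
      then show "av (coeff F i * (x ^ i - y ^ i)) < M"
      proof cases
        case 2
        have "av (coeff F i * (x ^ i - y ^ i)) \<le> av (coeff F i) * (av (x - y) * \<rho> ^ (i - 1))"
          unfolding av_mult using av_power_diff_le[of x \<rho> y i] x y
          by (intro mult_left_mono) (simp_all add: av_nonneg)
        also have "\<dots> = av (coeff F i) * \<rho> ^ (i - 1) * av (x - y)"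
          by (simp only: mult_ac)
        also have "\<dots> < M"
          unfolding M_def using assms[OF 2] \<open>x \<noteq> y\<close> by (simp add: av_pos_iff)
        finally show ?thesis .
      qed (use \<open>0 < M\<close> in simp)
    qed (use \<open>0 < M\<close> in simp_all)
    ultimately show False
      by simp
  qed
qed

lemma exists_root_in_disk:
  assumes "alg_closed_field TYPE('a)" and "F \<noteq> 0" and "av (coeff F 0) < av (coeff F 1) * r"
  shows "\<exists>z. av z < r \<and> poly F z = 0"
proof (rule ccontr)
  assume "\<not> (\<exists>z. av z < r \<and> poly F z = 0)"
  then have "\<And>z. poly F z = 0 \<Longrightarrow> r \<le> av z"
    by (meson not_le)
  moreover have "0 < av (coeff F 1) * r"
    using assms(3) av_nonneg[of "coeff F 0"] by linarith
  then have "0 \<le> r"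
    using av_nonneg[of "coeff F 1"] by (auto simp: zero_less_mult_iff)
  ultimately have "av (coeff F 1) * r ^ 1 \<le> av (coeff F 0)"
    by (intro av_coeff_power_le_av_coeff_0[OF assms(1,2)])
  with assms(3) show False
    by simp
qed

lemma perturbed_coeff_power_less:
  assumes newton: "\<And>j. av (coeff G (Suc j)) * r ^ j \<le> av (coeff G 1)"
    and close: "\<And>j. av (coeff F j - coeff G j) \<le> \<delta>" and "\<delta> < av (coeff G 1)"
    and "0 \<le> \<rho>" and "\<rho> < r" and "r \<le> 1" and "2 \<le> i"
  shows "av (coeff F i) * \<rho> ^ (i - 1) < av (coeff F 1)"
proof -
  have "0 \<le> \<delta>"
    using close[of 0] av_nonneg[of "coeff F 0 - coeff G 0"] by linarith
  have "\<rho> ^ (i - 1) \<le> 1"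
    using assms(4-6) by (simp add: power_le_one)
  have "av (coeff G i) * \<rho> ^ (i - 1) < av (coeff G 1)"
  proof (cases "coeff G i = 0")
    case False
    then have "av (coeff G i) * \<rho> ^ (i - 1) < av (coeff G i) * r ^ (i - 1)"
      using assms(4,5,7) by (simp add: av_pos_iff power_strict_mono)
    also have "\<dots> \<le> av (coeff G 1)"
      using newton[of "i - 1"] assms(7) by (simp add: Suc_diff_Suc numeral_2_eq_2)
    finally show ?thesis .
  qed (use \<open>0 \<le> \<delta>\<close> assms(3) in simp)
  moreover have "\<delta> * \<rho> ^ (i - 1) < av (coeff G 1)"
    using mult_left_le[OF \<open>\<rho> ^ (i - 1) \<le> 1\<close> \<open>0 \<le> \<delta>\<close>] assms(3) by linarith
  moreover have "av (coeff F i) \<le> max (av (coeff G i)) \<delta>"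
    using av_add_le_max[of "coeff G i" "coeff F i - coeff G i"] close[of i]
    by (auto simp: max_def split: if_splits)
  then have "av (coeff F i) * \<rho> ^ (i - 1) \<le> max (av (coeff G i)) \<delta> * \<rho> ^ (i - 1)"
    using assms(4) by (simp add: mult_right_mono)
  moreover have "av (coeff F 1) = av (coeff G 1)"
    using close[of 1] assms(3) by (intro av_eq_of_av_diff_less) simp
  ultimately show ?thesis
    by (auto simp: max_def split: if_splits)
qed

lemma unique_root_in_disk_of_perturbation:
  assumes "alg_closed_field TYPE('a)" and "F \<noteq> 0" and "r \<le> 1" and "coeff G 0 = 0"
    and newton: "\<And>j. av (coeff G (Suc j)) * r ^ j \<le> av (coeff G 1)"
    and close: "\<And>j. av (coeff F j - coeff G j) \<le> \<delta>" and small: "\<delta> < av (coeff G 1) * r"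
  shows "\<exists>!x. av x < r \<and> poly F x = 0"
proof (rule ex_ex1I)
  have "0 \<le> \<delta>"
    using close[of 0] av_nonneg[of "coeff F 0 - coeff G 0"] by linarith
  then have "\<delta> < av (coeff G 1)"
    using small assms(3) av_nonneg[of "coeff G 1"] mult_left_le[of r "av (coeff G 1)"] by linarith
  then have "av (coeff F 1) = av (coeff G 1)"
    using close[of 1] by (intro av_eq_of_av_diff_less) simp
  moreover have "av (coeff F 0) \<le> \<delta>"
    using close[of 0] assms(4) by simp
  ultimately show "\<exists>x. av x < r \<and> poly F x = 0"
    using small by (intro exists_root_in_disk[OF assms(1,2)]) simp
  fix x y
  assume x: "av x < r \<and> poly F x = 0" and y: "av y < r \<and> poly F y = 0"
  define \<rho> where "\<rho> = max (av x) (av y)"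
  have "0 \<le> \<rho>" and "\<rho> < r"
    using x y av_nonneg[of x] by (auto simp: \<rho>_def)
  have "inj_on (poly F) {x. av x \<le> \<rho>}"
    using perturbed_coeff_power_less[OF newton close \<open>\<delta> < av (coeff G 1)\<close> \<open>0 \<le> \<rho>\<close> \<open>\<rho> < r\<close> assms(3)]
    by (rule inj_on_poly_disk)
  then show "x = y"
    using x y by (auto simp: \<rho>_def inj_on_def)
qed

lemma newton_bounds_of_simple_root_at_0:
  assumes "alg_closed_field TYPE('a)" and "lead_coeff G = 1" and "order 0 G = 1"
    and "0 < r" and "r \<le> 1" and roots: "\<And>z. poly G z = 0 \<Longrightarrow> z \<noteq> 0 \<Longrightarrow> r \<le> av z"
  shows "coeff G 0 = 0"
    and "av (coeff G (Suc j)) * r ^ j \<le> av (coeff G 1)"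
    and "r ^ unit_disk_root_count G \<le> av (coeff G 1) * r"
proof -
  have "G \<noteq> 0"
    using assms(2) by auto
  then have "poly G 0 = 0"
    using assms(3) by (simp add: order_root)
  then obtain g where G: "G = [:-0, 1:] * g"
    by (metis dvdE poly_eq_0_iff_dvd)
  with \<open>G \<noteq> 0\<close> have "g \<noteq> 0"
    by auto
  have "lead_coeff g = 1"
    using assms(2) unfolding G lead_coeff_mult by simp
  have "order 0 G = order 0 [:-0, 1::'a:] + order 0 g"
    using \<open>G \<noteq> 0\<close> unfolding G by (rule order_mult)
  then have "order 0 g = 0"
    using assms(3) unfolding order_linear_factor by simp
  then have "poly g 0 \<noteq> 0"
    using \<open>g \<noteq> 0\<close> by (simp add: order_root)
  then have g_roots: "\<And>z. poly g z = 0 \<Longrightarrow> r \<le> av z"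
    using roots unfolding G by fastforce
  have coeff_G: "coeff G (Suc k) = coeff g k" for k
    unfolding G coeff_linear_factor_mult_Suc by simp
  have coeff_G_1: "coeff G 1 = coeff g 0"
    using coeff_G[of 0] by simp
  show "coeff G 0 = 0"
    unfolding G by simp
  show "av (coeff G (Suc j)) * r ^ j \<le> av (coeff G 1)"
    unfolding coeff_G coeff_G_1 using assms(4)
    by (intro av_coeff_power_le_av_coeff_0[OF assms(1) \<open>g \<noteq> 0\<close> _ g_roots]) simp
  have "r ^ unit_disk_root_count g \<le> av (coeff G 1)"
    using av_lead_coeff_power_root_count_le[OF assms(1) \<open>g \<noteq> 0\<close> _ assms(5) g_roots] assms(4)
    by (simp add: coeff_G \<open>lead_coeff g = 1\<close>)
  moreover have "unit_disk_root_count G = Suc (unit_disk_root_count g)"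
    unfolding G unit_disk_root_count_linear_mult[OF \<open>g \<noteq> 0\<close>] by simp
  ultimately show "r ^ unit_disk_root_count G \<le> av (coeff G 1) * r"
    using assms(4) by (simp add: mult.commute)
qed

lemma Min_av_nonzero_disk_roots:
  assumes "G \<noteq> 0" and "{x. av x < 1 \<and> x \<noteq> 0 \<and> poly G x = 0} \<noteq> {}"
  defines "r \<equiv> Min (av ` {x. av x < 1 \<and> x \<noteq> 0 \<and> poly G x = 0})"
  shows "0 < r" and "r < 1" and "\<And>z. poly G z = 0 \<Longrightarrow> z \<noteq> 0 \<Longrightarrow> r \<le> av z"
proof -
  let ?D = "{x. av x < 1 \<and> x \<noteq> 0 \<and> poly G x = 0}"
  have "finite ?D"
    by (rule rev_finite_subset[OF poly_roots_finite[OF assms(1)]]) auto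
  then have "r \<in> av ` ?D" and r_le: "\<And>z. z \<in> ?D \<Longrightarrow> r \<le> av z"
    using assms(2) by (simp_all add: r_def)
  then show "0 < r" and "r < 1"
    by (auto simp: av_pos_iff)
  show "r \<le> av z" if "poly G z = 0" and "z \<noteq> 0" for z
    using r_le[of z] that \<open>r < 1\<close> by (cases "av z < 1") auto
qed

lemma unique_root_in_disk_of_fval:
  assumes "av_complete av" and "alg_closed_field TYPE('a)"
    and "\<forall>i<n. \<forall>k. av (fps_nth (c i) k) \<le> 1" and "order 0 (f0poly n c) = 1"
    and "0 < r" and "r < 1" and "\<And>z. poly (f0poly n c) z = 0 \<Longrightarrow> z \<noteq> 0 \<Longrightarrow> r \<le> av z"
    and small: "av t < r ^ unit_disk_root_count (f0poly n c)"
  shows "\<exists>!x. av x < r \<and> fval av n c t x = 0"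
proof -
  define G where "G = f0poly n c"
  define F where "F = monic_of_coeffs n (\<lambda>i. ps_eval av (c i) t)"
  have "lead_coeff G = 1"
    by (simp add: G_def f0poly_eq_monic_of_coeffs)
  note newton = newton_bounds_of_simple_root_at_0[OF assms(2) this assms(4)[folded G_def]
      assms(5) less_imp_le[OF assms(6)] assms(7)[folded G_def]]
  have "av t < 1"
    using small power_le_one[of r "unit_disk_root_count G"] assms(5,6) by (simp add: G_def)
  then have close: "av (coeff F j - coeff G j) \<le> av t" for j
    using av_ps_eval_minus_constant_le[OF assms(1)] assms(3)
    by (simp add: F_def G_def f0poly_eq_monic_of_coeffs coeff_monic_of_coeffs av_nonneg)
  have "av t < av (coeff G 1) * r"
    using small newton(3) by (simp add: G_def)
  then have "\<exists>!x. av x < r \<and> poly F x = 0"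
    using unique_root_in_disk_of_perturbation[OF assms(2) _ _ newton(1,2) close] assms(6)
    by (simp add: F_def)
  then show ?thesis
    by (simp add: F_def fval_eq_poly_monic_of_coeffs)
qed

end

theorem proposition4p7:
  fixes av :: "'a::field \<Rightarrow> real" and p n :: nat and c :: "nat \<Rightarrow> 'a fps"
  assumes "prime p"
    and "nonarch_abs av" and "av_complete av" and "alg_closed_field TYPE('a)"
    and "av (of_nat p) = 1 / real p"
    and "\<forall>i<n. \<forall>k. av (fps_nth (c i) k) \<le> 1"
    and "poly (f0poly n c) 0 = 0" and "order 0 (f0poly n c) = 1"
    and "{x. av x < 1 \<and> x \<noteq> 0 \<and> poly (f0poly n c) x = 0} \<noteq> {}"
  shows "let Dvert = {x. av x < 1 \<and> x \<noteq> 0 \<and> poly (f0poly n c) x = 0};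
             e = (\<Sum>x\<in>{x. av x < 1 \<and> poly (f0poly n c) x = 0}. order x (f0poly n c));
             r = Min (av ` Dvert)
         in \<forall>t'. av t' < r ^ e \<longrightarrow> (\<exists>!x'. av x' < r \<and> fval av n c t' x' = 0)"
proof -
  interpret nonarch_field av
    by (rule nonarch_field.intro) (fact assms(2))
  have "f0poly n c \<noteq> 0"
    by (simp add: f0poly_eq_monic_of_coeffs)
  note r_bounds = Min_av_nonzero_disk_roots[OF this assms(9)]
  show ?thesis
    unfolding Let_def unit_disk_root_count_def[symmetric]
    using unique_root_in_disk_of_fval[OF assms(3,4,6,8) r_bounds] by blast
qed

end
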